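(* Fix $f\in\mathbb{N}$ and $\ell=2f+1$. Consider a family of directed graphs $G=(V,E)$ with $n=|V|\to\infty$, and for each $G$ the reinforcement $G'=(V',E')$, $P$, $A'$ with $V'=V\times[\ell]$, $P(v_i)=v$, $E'=\{(v',w') : (P(v'),P(w'))\in E\}$, and $A'$ defined from $A$ by: every non-faulty $v'$ initializes copies of the state variables of $P(v')$ in $A$, sends on each $(v',w')\in E'$ the message $P(v')$ would send on $(P(v'),P(w'))$ under $A$, and updates its state as if $P(v')$ received from each in-neighbor $w$ the message sent to $v'$ by at least $f+1$ of the copies $w'$ of $w$. Let $F'\subseteq V'$ contain each node independently with probability $p=p(n)$ (Byzantine faults), and assume $p\in o(1)$. (a) If $p\in o(n^{-1/(f+1)})$, then with probability $1-o(1)$, for every $v\in V$ at most $f$ of its copies $v_1,\dots,v_\ell$ are in $F'$; consequently, with probability $1-o(1)$, $A'$ strongly simulates $A$ (every non-faulty $v'$ computes in every round the state of $P(v')$ in the fault-free execution of $A$), i.e., the reinforcement is valid under $\mathrm{Byz}(p)$. (b) If $G$ contains $\Omega(n)$ nodes with non-zero outdegree and $p\in\omega(n^{-1/(f+1)})$, then with probability $1-o(1)$ there is a node $v$ with non-zero outdegree having more than $f$ copies in $F'$; in particular, the reinforcement is not valid (for a scheduling algorithm $A$ and inputs under which $v$ sends a message over an outgoing edge, the simulation fails if the faulty copies send nothing).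
   Context: Networks are synchronous directed graphs; in each round each node sends messages on outgoing links determined by its state and updates its state from received messages and environment input, according to a scheduling algorithm $A$. $\mathrm{Byz}(p)$: each node of $V'$ is independently faulty with probability $p$, and faulty nodes behave arbitrarily. A reinforcement $(G',P,A')$ is valid (strong) under $\mathrm{Byz}(p)$ if $A'$ is a (strong) simulation of $A$ with probability $1-o(1)$ as $n\to\infty$, where strong simulation means every non-faulty $v'\in V'$ computes in every round the state of $P(v')$ in the fault-free execution of $A$ on $G$ (given that each non-faulty $v'$ receives the same environment input as $P(v')$). Asymptotic notation is with respect to $n\to\infty$ with $f$ fixed. *)

theory Defs
  imports "HOL-Probability.Probability" "HOL-Library.Landau_Symbols"
begin

text \<open>A synchronous scheduling algorithm on a network whose nodes have type 'v:
  initial state of each node, the message (or none) a node in a given state sends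
  on an outgoing link to a given node, and the state update from the current
  state, the environment input and the received messages (indexed by sender).\<close>
record ('v, 's, 'm, 'i) alg =
  alg_init  :: "'v \<Rightarrow> 's"
  alg_send  :: "'v \<Rightarrow> 's \<Rightarrow> 'v \<Rightarrow> 'm option"
  alg_trans :: "'v \<Rightarrow> 's \<Rightarrow> 'i \<Rightarrow> ('v \<Rightarrow> 'm option) \<Rightarrow> 's"

definition digraph :: "'v set \<Rightarrow> ('v \<times> 'v) set \<Rightarrow> bool" where
  "digraph V E \<longleftrightarrow> finite V \<and> E \<subseteq> V \<times> V \<and> (\<forall>v. (v, v) \<notin> E)"

fun exec :: "('v \<times> 'v) set \<Rightarrow> ('v, 's, 'm, 'i) alg \<Rightarrow> (nat \<Rightarrow> 'v \<Rightarrow> 'i) \<Rightarrow> nat \<Rightarrow> 'v \<Rightarrow> 's" where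
  "exec E A inp 0 = alg_init A"
| "exec E A inp (Suc r) = (\<lambda>v. alg_trans A v (exec E A inp r v) (inp r v)
      (\<lambda>w. if (w, v) \<in> E then alg_send A w (exec E A inp r w) v else None))"

text \<open>Copies: V' = V x [l] with l = 2f+1, P = fst, E' = pairs of copies of edges.\<close>
definition reinf_nodes :: "'v set \<Rightarrow> nat \<Rightarrow> ('v \<times> nat) set" where
  "reinf_nodes V f = V \<times> {..<2 * f + 1}"

definition reinf_edges :: "('v \<times> 'v) set \<Rightarrow> nat \<Rightarrow> (('v \<times> nat) \<times> ('v \<times> nat)) set" where
  "reinf_edges E f = {(x, y). (fst x, fst y) \<in> E \<and> snd x < 2 * f + 1 \<and> snd y < 2 * f + 1}"

definition vote :: "nat \<Rightarrow> (nat \<Rightarrow> 'm option) \<Rightarrow> 'm option" where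
  "vote f g = (if \<exists>m. f + 1 \<le> card {i. i < 2 * f + 1 \<and> g i = Some m}
               then Some (THE m. f + 1 \<le> card {i. i < 2 * f + 1 \<and> g i = Some m})
               else None)"

text \<open>Execution of the reinforced algorithm A' on G' with faulty set F; adv r x y is the
  (arbitrary) message a faulty node x sends to y in round r.  States of faulty nodes are irrelevant.\<close>
fun rexec :: "nat \<Rightarrow> ('v \<times> 'v) set \<Rightarrow> ('v, 's, 'm, 'i) alg \<Rightarrow> ('v \<times> nat) set
      \<Rightarrow> (nat \<Rightarrow> 'v \<times> nat \<Rightarrow> 'v \<times> nat \<Rightarrow> 'm option) \<Rightarrow> (nat \<Rightarrow> 'v \<Rightarrow> 'i)
      \<Rightarrow> nat \<Rightarrow> 'v \<times> nat \<Rightarrow> 's" where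
  "rexec f E A F adv inp 0 = (\<lambda>x. alg_init A (fst x))"
| "rexec f E A F adv inp (Suc r) = (\<lambda>y. alg_trans A (fst y) (rexec f E A F adv inp r y)
      (inp r (fst y))
      (\<lambda>w. if (w, fst y) \<in> E then
             vote f (\<lambda>i. if (w, i) \<in> F then adv r (w, i) y
                         else alg_send A w (rexec f E A F adv inp r (w, i)) (fst y))
           else None))"

definition strong_sim :: "nat \<Rightarrow> 'v set \<Rightarrow> ('v \<times> 'v) set \<Rightarrow> ('v, 's, 'm, 'i) alg \<Rightarrow> ('v \<times> nat) set
      \<Rightarrow> (nat \<Rightarrow> 'v \<times> nat \<Rightarrow> 'v \<times> nat \<Rightarrow> 'm option) \<Rightarrow> (nat \<Rightarrow> 'v \<Rightarrow> 'i) \<Rightarrow> bool" where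
  "strong_sim f V E A F adv inp \<longleftrightarrow>
     (\<forall>r. \<forall>x \<in> reinf_nodes V f - F. rexec f E A F adv inp r x = exec E A inp r (fst x))"

text \<open>Byz(p): each node of V' independently faulty with probability p
  (faulty set = {x. X x}).\<close>
definition fault_pmf :: "'v set \<Rightarrow> nat \<Rightarrow> real \<Rightarrow> ('v \<times> nat \<Rightarrow> bool) pmf" where
  "fault_pmf V f p = Pi_pmf (reinf_nodes V f) False (\<lambda>_. bernoulli_pmf p)"

end

theory Submission
  imports Defs
begin

text \<open>The copies of a node decide by majority vote, so as long as every node keeps at most f
  faulty copies, induction on the rounds shows that the correct copies follow the fault-free
  execution.  A node has f+1 faulty copies with probability about p^(f+1), so by a union bound
  this fails with probability O(n p^(f+1)), which vanishes below the threshold n^(-1/(f+1)).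
  Above it, the expected number of sending nodes whose first f+1 copies are faulty, next to a
  correct copy of an out-neighbour, is about n p^(f+1) \<longrightarrow> \<infinity>; these events are nearly
  uncorrelated, so by the second moment method one of them occurs with high probability, and
  silent faulty copies then mislead an algorithm that watches for silent in-neighbours.\<close>

section \<open>Voting and simulation\<close>

lemma vote_eq_if_at_most_f_deviate:
  assumes few: "card {i. i < 2 * f + 1 \<and> \<not> agrees i} \<le> f"
    and agree: "\<And>i. i < 2 * f + 1 \<Longrightarrow> agrees i \<Longrightarrow> g i = M"
  shows "vote f g = M"
proof -
  define Ag where "Ag = {i. i < 2 * f + 1 \<and> agrees i}"
  define Dv where "Dv = {i. i < 2 * f + 1 \<and> \<not> agrees i}"
  have "Ag \<union> Dv = {..<2 * f + 1}" "Ag \<inter> Dv = {}" by (auto simp: Ag_def Dv_def)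
  hence "card Ag + card Dv = 2 * f + 1"
    by (metis card_Un_disjoint card_lessThan finite_Un finite_lessThan)
  hence card_Ag: "f + 1 \<le> card Ag" using few unfolding Dv_def by linarith
  have minority: "card {i. i < 2 * f + 1 \<and> g i = Some m} \<le> f" if "M \<noteq> Some m" for m
  proof -
    have "{i. i < 2 * f + 1 \<and> g i = Some m} \<subseteq> Dv" using agree that by (auto simp: Dv_def)
    hence "card {i. i < 2 * f + 1 \<and> g i = Some m} \<le> card Dv"
      by (intro card_mono) (auto simp: Dv_def)
    thus ?thesis using few by (simp add: Dv_def)
  qed
  show ?thesis
  proof (cases M)
    case None
    hence "\<not> (\<exists>m. f + 1 \<le> card {i. i < 2 * f + 1 \<and> g i = Some m})"
      using minority by (metis not_less_eq_eq option.distinct(1) Suc_eq_plus1)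
    thus ?thesis using None by (simp add: vote_def)
  next
    case (Some m)
    have "Ag \<subseteq> {i. i < 2 * f + 1 \<and> g i = Some m}" using agree Some by (auto simp: Ag_def)
    hence majority: "f + 1 \<le> card {i. i < 2 * f + 1 \<and> g i = Some m}"
      using card_Ag card_mono[of "{i. i < 2 * f + 1 \<and> g i = Some m}" Ag] by fastforce
    have "(THE m. f + 1 \<le> card {i. i < 2 * f + 1 \<and> g i = Some m}) = m"
    proof (rule the_equality)
      fix m' assume "f + 1 \<le> card {i. i < 2 * f + 1 \<and> g i = Some m'}"
      thus "m' = m" using minority[of m'] Some by fastforce
    qed (rule majority)
    thus ?thesis using majority Some by (auto simp: vote_def)
  qed
qed

lemma vote_eq_None_if_prefix_silent:
  assumes "\<And>i. i < f + 1 \<Longrightarrow> silent i"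
  shows "vote f (\<lambda>i. if silent i then None else Some ()) = None"
proof -
  have "card {i. i < 2 * f + 1 \<and> (if silent i then None else Some ()) = Some m} \<le> f" for m
  proof -
    have "{i. i < 2 * f + 1 \<and> (if silent i then None else Some ()) = Some m} \<subseteq> {f + 1..<2 * f + 1}"
      using assms by (auto split: if_splits) (meson not_le)
    from card_mono[OF _ this] show ?thesis by simp
  qed
  hence "\<not> (\<exists>m. f + 1 \<le> card {i. i < 2 * f + 1 \<and> (if silent i then None else Some ()) = Some m})"
    by (metis not_less_eq_eq Suc_eq_plus1)
  thus ?thesis by (simp add: vote_def)
qed

lemma strong_sim_if_few_faulty_copies:
  assumes G: "digraph V E"
    and few: "\<forall>v \<in> V. card {i. i < 2 * f + 1 \<and> X (v, i)} \<le> f"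
  shows "strong_sim f V E A {x. X x} adv inp"
  unfolding strong_sim_def
proof
  fix r
  show "\<forall>y \<in> reinf_nodes V f - {x. X x}. rexec f E A {x. X x} adv inp r y = exec E A inp r (fst y)"
  proof (induction r)
    case 0
    thus ?case by simp
  next
    case (Suc r)
    show ?case
    proof
      fix y assume y: "y \<in> reinf_nodes V f - {x. X x}"
      have received: "vote f (\<lambda>i. if (w, i) \<in> {x. X x} then adv r (w, i) y
                   else alg_send A w (rexec f E A {x. X x} adv inp r (w, i)) (fst y))
              = alg_send A w (exec E A inp r w) (fst y)" if "(w, fst y) \<in> E" for w
      proof (rule vote_eq_if_at_most_f_deviate[where agrees = "\<lambda>i. \<not> X (w, i)"])
        have "w \<in> V" using G that by (auto simp: digraph_def)
        thus "card {i. i < 2 * f + 1 \<and> \<not> \<not> X (w, i)} \<le> f" using few by simp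
        fix i assume "i < 2 * f + 1" "\<not> X (w, i)"
        hence "(w, i) \<in> reinf_nodes V f - {x. X x}" using \<open>w \<in> V\<close> by (auto simp: reinf_nodes_def)
        thus "(if (w, i) \<in> {x. X x} then adv r (w, i) y
                   else alg_send A w (rexec f E A {x. X x} adv inp r (w, i)) (fst y))
              = alg_send A w (exec E A inp r w) (fst y)"
          using Suc by auto
      qed
      have "rexec f E A {x. X x} adv inp r y = exec E A inp r (fst y)" using Suc y by blast
      thus "rexec f E A {x. X x} adv inp (Suc r) y = exec E A inp (Suc r) (fst y)"
        using received by (simp cong: if_cong)
    qed
  qed
qed

section \<open>The fault distribution\<close>

lemma finite_set_fault_pmf:
  assumes "finite V"
  shows "finite (set_pmf (fault_pmf V f p))"
proof -
  let ?V' = "reinf_nodes V f"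
  have fin: "finite ?V'" using assms by (simp add: reinf_nodes_def)
  have "set_pmf (fault_pmf V f p) \<subseteq> {X. \<forall>x. x \<notin> ?V' \<longrightarrow> X x = False}"
    unfolding fault_pmf_def by (rule set_Pi_pmf_subset[OF fin])
  also have "\<dots> \<subseteq> (\<lambda>S x. x \<in> S) ` Pow ?V'"
  proof
    fix X assume "X \<in> {X. \<forall>x. x \<notin> ?V' \<longrightarrow> X x = False}"
    hence "X = (\<lambda>x. x \<in> {x. X x})" "{x. X x} \<in> Pow ?V'" by auto
    thus "X \<in> (\<lambda>S x. x \<in> S) ` Pow ?V'" by blast
  qed
  finally show ?thesis using fin by (meson finite_Pow_iff finite_imageI finite_subset)
qed

lemma prob_fault_pmf_all_faulty:
  assumes "finite V" "S \<subseteq> reinf_nodes V f" "0 \<le> p" "p \<le> 1"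
  shows "measure_pmf.prob (fault_pmf V f p) {X. \<forall>x\<in>S. X x} = p ^ card S"
proof -
  let ?V' = "reinf_nodes V f"
  have fin: "finite ?V'" using assms by (simp add: reinf_nodes_def)
  define B where "B = (\<lambda>x. if x \<in> S then {True} else (UNIV :: bool set))"
  have "{X. \<forall>x\<in>S. X x} = Pi ?V' B" using assms(2) by (auto simp: B_def Pi_def)
  hence "measure_pmf.prob (fault_pmf V f p) {X. \<forall>x\<in>S. X x}
      = (\<Prod>x\<in>?V'. measure_pmf.prob (bernoulli_pmf p) (B x))"
    unfolding fault_pmf_def using fin by (simp add: measure_Pi_pmf_Pi)
  also have "\<dots> = (\<Prod>x\<in>?V'. if x \<in> S then p else 1)"
    using assms by (intro prod.cong) (auto simp: B_def measure_pmf_single)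
  also have "\<dots> = p ^ card S"
    using fin assms(2) by (simp add: prod.If_cases Int_absorb1)
  finally show ?thesis .
qed

text \<open>Union bound over the nodes and the (f+1)-subsets of their copies.\<close>

lemma prob_few_faulty_copies_ge:
  assumes "finite V" "0 \<le> p" "p \<le> 1"
  shows "1 - real (card V) * real ((2 * f + 1) choose (f + 1)) * p ^ (f + 1)
    \<le> measure_pmf.prob (fault_pmf V f p) {X. \<forall>v\<in>V. card {i. i < 2 * f + 1 \<and> X (v, i)} \<le> f}"
proof -
  let ?M = "fault_pmf V f p"
  define K where "K = {S. S \<subseteq> {..<2 * f + 1} \<and> card S = f + 1}"
  define Ev :: "'a \<times> nat set \<Rightarrow> ('a \<times> nat \<Rightarrow> bool) set"
    where "Ev = (\<lambda>(v, S). {X. \<forall>x\<in>{v} \<times> S. X x})"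
  have finK: "finite K" unfolding K_def by (rule finite_subset[of _ "Pow {..<2 * f + 1}"]) auto
  have card_K: "card K = (2 * f + 1) choose (f + 1)" unfolding K_def by (simp add: n_subsets)
  have bad_sub: "- {X. \<forall>v\<in>V. card {i. i < 2 * f + 1 \<and> X (v, i)} \<le> f} \<subseteq> (\<Union>e\<in>V \<times> K. Ev e)"
  proof
    fix X assume "X \<in> - {X. \<forall>v\<in>V. card {i. i < 2 * f + 1 \<and> X (v, i)} \<le> f}"
    then obtain v where v: "v \<in> V" "f + 1 \<le> card {i. i < 2 * f + 1 \<and> X (v, i)}" by force
    then obtain T where "T \<subseteq> {i. i < 2 * f + 1 \<and> X (v, i)}" "card T = f + 1"
      by (meson obtain_subset_with_card_n)
    hence "T \<in> K" "X \<in> Ev (v, T)" by (auto simp: K_def Ev_def)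
    thus "X \<in> (\<Union>e\<in>V \<times> K. Ev e)" using v by blast
  qed
  have prob_Ev: "measure_pmf.prob ?M (Ev e) = p ^ (f + 1)" if "e \<in> V \<times> K" for e
  proof -
    obtain v S where e: "e = (v, S)" by fastforce
    have sub: "{v} \<times> S \<subseteq> reinf_nodes V f" and card: "card ({v} \<times> S) = f + 1"
      using that e by (auto simp: K_def reinf_nodes_def card_cartesian_product_singleton)
    have "Ev e = {X. \<forall>x\<in>{v} \<times> S. X x}" by (simp add: Ev_def e)
    thus ?thesis using prob_fault_pmf_all_faulty[OF assms(1) sub assms(2,3)] card by simp
  qed
  have "measure_pmf.prob ?M (- {X. \<forall>v\<in>V. card {i. i < 2 * f + 1 \<and> X (v, i)} \<le> f})
      \<le> measure_pmf.prob ?M (\<Union>e\<in>V \<times> K. Ev e)"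
    by (rule measure_pmf.finite_measure_mono[OF bad_sub]) simp
  also have "\<dots> \<le> (\<Sum>e\<in>V \<times> K. measure_pmf.prob ?M (Ev e))"
    by (rule measure_pmf.finite_measure_subadditive_finite) (use assms(1) finK in auto)
  also have "\<dots> = real (card V) * real ((2 * f + 1) choose (f + 1)) * p ^ (f + 1)"
    by (simp add: prob_Ev card_cartesian_product card_K)
  finally show ?thesis
    using measure_pmf.prob_compl[of "{X. \<forall>v\<in>V. card {i. i < 2 * f + 1 \<and> X (v, i)} \<le> f}" ?M]
    by (simp add: Compl_eq_Diff_UNIV)
qed

text \<open>Second moment method: Chebyshev's inequality for the number of events that occur.\<close>

lemma prob_no_event_le_second_moment:
  fixes M :: "'a pmf" and Ev :: "'b \<Rightarrow> 'a set"
  assumes "finite (set_pmf M)" "finite W"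
    and \<mu>: "\<mu> = (\<Sum>u\<in>W. measure_pmf.prob M (Ev u))" "\<mu> > 0"
    and B: "(\<Sum>u\<in>W. \<Sum>u'\<in>W. measure_pmf.prob M (Ev u \<inter> Ev u')) \<le> B"
  shows "measure_pmf.prob M {X. \<forall>u\<in>W. X \<notin> Ev u} \<le> B / \<mu>\<^sup>2 - 1"
proof -
  define N where "N = (\<lambda>X. \<Sum>u\<in>W. indicator (Ev u) X :: real)"
  have int: "integrable M h" for h :: "'a \<Rightarrow> real"
    by (rule integrable_measure_pmf_finite[OF assms(1)])
  have EN: "measure_pmf.expectation M N = \<mu>"
    unfolding N_def \<mu>(1) using int by (subst Bochner_Integration.integral_sum) auto
  have N_sq: "(N X)\<^sup>2 = (\<Sum>u\<in>W. \<Sum>u'\<in>W. indicator (Ev u \<inter> Ev u') X)" for X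
    unfolding N_def power2_eq_square sum_product by (simp add: indicator_inter_arith)
  have "measure_pmf.expectation M (\<lambda>X. (N X)\<^sup>2)
       = (\<Sum>u\<in>W. \<Sum>u'\<in>W. measure_pmf.prob M (Ev u \<inter> Ev u'))"
    unfolding N_sq using int by (simp add: Bochner_Integration.integral_sum)
  hence var: "measure_pmf.variance M N \<le> B - \<mu>\<^sup>2"
    using measure_pmf.variance_eq[of M N] int EN B by simp
  have "measure_pmf.prob M {X. \<forall>u\<in>W. X \<notin> Ev u}
      \<le> measure_pmf.prob M {X \<in> space M. \<bar>N X - measure_pmf.expectation M N\<bar> \<ge> \<mu>}"
    by (rule measure_pmf.finite_measure_mono) (use EN \<mu>(2) in \<open>auto simp: N_def indicator_def\<close>)
  also have "\<dots> \<le> measure_pmf.variance M N / \<mu>\<^sup>2"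
    by (rule measure_pmf.Chebyshev_inequality) (auto simp: int \<mu>(2))
  also have "\<dots> \<le> (B - \<mu>\<^sup>2) / \<mu>\<^sup>2"
    using var by (simp add: divide_right_mono)
  also have "\<dots> = B / \<mu>\<^sup>2 - 1"
    using \<mu>(2) by (simp add: diff_divide_distrib)
  finally show ?thesis .
qed

section \<open>A failing simulation\<close>

text \<open>In the fault-free execution every node hears all its in-neighbours, so it stays in state 0.\<close>

definition silence_detector :: "('v \<times> 'v) set \<Rightarrow> ('v, nat, unit, unit) alg" where
  "silence_detector E = \<lparr>alg_init = (\<lambda>v. 0), alg_send = (\<lambda>v s w. Some ()),
     alg_trans = (\<lambda>v s i g. if \<forall>u. (u, v) \<in> E \<longrightarrow> g u \<noteq> None then 0 else 1)\<rparr>"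

lemma silence_detector_simps [simp]:
  "alg_init (silence_detector E) = (\<lambda>v. 0)"
  "alg_send (silence_detector E) = (\<lambda>v s w. Some ())"
  "alg_trans (silence_detector E) = (\<lambda>v s i g. if \<forall>u. (u, v) \<in> E \<longrightarrow> g u \<noteq> None then 0 else 1)"
  by (simp_all add: silence_detector_def)

definition out_neighbour :: "('v \<times> 'v) set \<Rightarrow> 'v \<Rightarrow> 'v" where
  "out_neighbour E u = (SOME w. (u, w) \<in> E)"

lemma out_neighbourD:
  assumes "digraph V E" "(u, w) \<in> E"
  shows "(u, out_neighbour E u) \<in> E" "u \<in> V" "out_neighbour E u \<in> V" "out_neighbour E u \<noteq> u"
proof -
  show uw: "(u, out_neighbour E u) \<in> E"
    unfolding out_neighbour_def by (rule someI[of "\<lambda>w. (u, w) \<in> E", OF assms(2)])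
  thus "u \<in> V" "out_neighbour E u \<in> V" "out_neighbour E u \<noteq> u"
    using assms(1) by (auto simp: digraph_def)
qed

text \<open>If the faulty copies of u stay silent, copy 0 of the out-neighbour hears nothing from u
  in round 0 and leaves state 0.\<close>

definition silenced_link :: "nat \<Rightarrow> ('v \<times> 'v) set \<Rightarrow> 'v \<Rightarrow> ('v \<times> nat \<Rightarrow> bool) set" where
  "silenced_link f E u = {X. (\<forall>i < f + 1. X (u, i)) \<and> \<not> X (out_neighbour E u, 0)}"

lemma faulty_copies_gt_if_silenced_link:
  assumes "X \<in> silenced_link f E u"
  shows "f < card {i. i < 2 * f + 1 \<and> X (u, i)}"
proof -
  have "{..<f + 1} \<subseteq> {i. i < 2 * f + 1 \<and> X (u, i)}"
    using assms by (auto simp: silenced_link_def)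
  from card_mono[OF _ this] show ?thesis by simp
qed

lemma not_strong_sim_if_silenced_link:
  assumes "digraph V E" "(u, w) \<in> E" and X: "X \<in> silenced_link f E u"
  shows "\<not> strong_sim f V E (silence_detector E) {x. X x} (\<lambda>_ _ _. None) inp"
proof
  let ?w = "out_neighbour E u" and ?F = "{x. X x}" and ?A = "silence_detector E"
  assume sim: "strong_sim f V E ?A ?F (\<lambda>_ _ _. None) inp"
  note uw = out_neighbourD[OF assms(1,2)]
  have "(?w, 0) \<in> reinf_nodes V f - ?F"
    using X uw by (auto simp: silenced_link_def reinf_nodes_def)
  hence "rexec f E ?A ?F (\<lambda>_ _ _. None) inp 1 (?w, 0) = exec E ?A inp 1 ?w"
    using sim by (simp add: strong_sim_def del: One_nat_def)
  moreover have "vote f (\<lambda>i. if X (u, i) then None else Some ()) = None"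
    by (rule vote_eq_None_if_prefix_silent) (use X in \<open>simp add: silenced_link_def\<close>)
  ultimately show False using uw(1) by (simp cong: if_cong split: if_splits)
qed

lemma prob_no_silenced_link_le:
  assumes G: "digraph V E" and p: "0 < p" "p < 1"
    and W: "\<forall>u\<in>W. \<exists>w. (u, w) \<in> E" "W \<noteq> {}"
  shows "measure_pmf.prob (fault_pmf V f p) {X. \<forall>u\<in>W. X \<notin> silenced_link f E u}
    \<le> (inverse (real (card W) * p ^ (f + 1)) + 1) / (1 - p)\<^sup>2 - 1"
proof -
  let ?M = "fault_pmf V f p"
  define a where "a = p ^ (f + 1)"
  define m where "m = real (card W)"
  have finV: "finite V" using G by (simp add: digraph_def)
  have WV: "W \<subseteq> V" using W(1) G by (auto simp: digraph_def)
  hence finW: "finite W" using finV by (rule finite_subset)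
  have a: "0 < a" using p by (simp add: a_def)
  have m: "0 < m" using W(2) finW by (simp add: m_def card_gt_0_iff)
  have card_copies: "card ({u} \<times> {..<f + 1}) = f + 1" for u :: 'a
    by (simp add: card_cartesian_product_singleton)
  have prob_link: "measure_pmf.prob ?M (silenced_link f E u) = a - a * p" if u: "u \<in> W" for u
  proof -
    obtain w where "(u, w) \<in> E" using W(1) u by blast
    note uw = out_neighbourD[OF G this]
    define S where "S = {u} \<times> {..<f + 1}"
    define S' where "S' = insert (out_neighbour E u, 0) S"
    have S: "S \<subseteq> reinf_nodes V f" "S' \<subseteq> reinf_nodes V f"
      using uw by (auto simp: S_def S'_def reinf_nodes_def)
    have "card S' = f + 2" using uw(4) by (simp add: S'_def S_def card_copies)
    have "silenced_link f E u = {X. \<forall>x\<in>S. X x} - {X. \<forall>x\<in>S'. X x}"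
      by (auto simp: silenced_link_def S_def S'_def)
    also have "measure_pmf.prob ?M \<dots>
        = measure_pmf.prob ?M {X. \<forall>x\<in>S. X x} - measure_pmf.prob ?M {X. \<forall>x\<in>S'. X x}"
      by (rule measure_pmf.finite_measure_Diff) (auto simp: S'_def)
    also have "\<dots> = a - a * p"
      using prob_fault_pmf_all_faulty[OF finV S(1)] prob_fault_pmf_all_faulty[OF finV S(2)] p
        \<open>card S' = f + 2\<close> by (simp add: S_def card_copies a_def)
    finally show ?thesis .
  qed
  have prob_links: "measure_pmf.prob ?M (silenced_link f E u \<inter> silenced_link f E u')
      \<le> (if u = u' then a else 0) + a\<^sup>2" if "u \<in> W" "u' \<in> W" for u u'
  proof (cases "u = u'")
    case True
    thus ?thesis using prob_link[OF that(1)] a p by (simp add: add_increasing2)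
  next
    case False
    define S where "S = {u, u'} \<times> {..<f + 1}"
    have S: "S \<subseteq> reinf_nodes V f" using that WV by (auto simp: S_def reinf_nodes_def)
    have card_S: "card S = 2 * (f + 1)" using False by (simp add: S_def card_cartesian_product)
    have "measure_pmf.prob ?M (silenced_link f E u \<inter> silenced_link f E u')
        \<le> measure_pmf.prob ?M {X. \<forall>x\<in>S. X x}"
      by (rule measure_pmf.finite_measure_mono) (auto simp: silenced_link_def S_def)
    also have "\<dots> = a\<^sup>2"
      using prob_fault_pmf_all_faulty[OF finV S] p
      by (simp add: a_def card_S power_even_eq power_mult_distrib power2_eq_square)
    finally show ?thesis using False by simp
  qed
  have "measure_pmf.prob ?M {X. \<forall>u\<in>W. X \<notin> silenced_link f E u}
      \<le> (m * a + (m * a)\<^sup>2) / (m * (a - a * p))\<^sup>2 - 1"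
  proof (rule prob_no_event_le_second_moment[OF finite_set_fault_pmf[OF finV] finW])
    show "m * (a - a * p) = (\<Sum>u\<in>W. measure_pmf.prob ?M (silenced_link f E u))"
      by (simp add: prob_link m_def)
    show "0 < m * (a - a * p)" using m a p by simp
    have "(\<Sum>u\<in>W. \<Sum>u'\<in>W. measure_pmf.prob ?M (silenced_link f E u \<inter> silenced_link f E u'))
        \<le> (\<Sum>u\<in>W. \<Sum>u'\<in>W. (if u = u' then a else 0) + a\<^sup>2)"
      by (intro sum_mono prob_links)
    also have "\<dots> = m * a + (m * a)\<^sup>2"
      using finW by (simp add: sum.distrib m_def power2_eq_square algebra_simps)
    finally show "(\<Sum>u\<in>W. \<Sum>u'\<in>W. measure_pmf.prob ?M (silenced_link f E u \<inter> silenced_link f E u'))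
        \<le> m * a + (m * a)\<^sup>2" .
  qed
  also have "(m * a + (m * a)\<^sup>2) / (m * (a - a * p))\<^sup>2 = (inverse (m * a) + 1) / (1 - p)\<^sup>2"
  proof -
    have "(z + z\<^sup>2) / (z * q)\<^sup>2 = (inverse z + 1) / q\<^sup>2" if "z > 0" "q > 0" for z q :: real
      using that by (simp add: field_simps power2_eq_square)
    from this[of "m * a" "1 - p"] m a p show ?thesis by (simp add: algebra_simps)
  qed
  finally show ?thesis by (simp add: a_def m_def)
qed

section \<open>Asymptotics around the threshold n^(-1/(f+1))\<close>

lemma pow_div_threshold:
  assumes "n > 0"
  shows "(x / real n powr (- 1 / real (k + 1))) ^ (k + 1) = real n * x ^ (k + 1)"
proof -
  have "(real n powr (- 1 / real (k + 1))) ^ (k + 1) = real n powr (real (k + 1) * (- 1 / real (k + 1)))"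
    using assms by (subst powr_power) auto
  also have "\<dots> = inverse (real n)"
    using assms by (simp add: powr_neg_one inverse_eq_divide)
  finally show ?thesis unfolding power_divide by (simp add: divide_inverse mult.commute)
qed

lemma tendsto_mult_pow_zero_if_smallo_threshold:
  fixes p :: "nat \<Rightarrow> real"
  assumes "p \<in> o(\<lambda>n. real n powr (- 1 / real (k + 1)))"
  shows "(\<lambda>n. real n * p n ^ (k + 1)) \<longlonglongrightarrow> 0"
proof -
  have "(\<lambda>n. (p n / real n powr (- 1 / real (k + 1))) ^ (k + 1)) \<longlonglongrightarrow> 0 ^ (k + 1)"
    by (intro tendsto_intros smalloD_tendsto[OF assms])
  moreover have "eventually (\<lambda>n. (p n / real n powr (- 1 / real (k + 1))) ^ (k + 1)
      = real n * p n ^ (k + 1)) sequentially"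
    using eventually_gt_at_top[of 0] by eventually_elim (rule pow_div_threshold)
  ultimately show ?thesis using tendsto_cong by force
qed

lemma filterlim_mult_pow_at_top_if_smallomega_threshold:
  fixes p :: "nat \<Rightarrow> real" and m :: "nat \<Rightarrow> nat"
  assumes p: "p \<in> \<omega>(\<lambda>n. real n powr (- 1 / real (k + 1)))" "\<forall>n. 0 \<le> p n"
    and m: "(\<lambda>n. real (m n)) \<in> \<Omega>(\<lambda>n. real n)"
  shows "filterlim (\<lambda>n. real (m n) * p n ^ (k + 1)) at_top sequentially"
proof -
  define g where "g = (\<lambda>n. real n powr (- 1 / real (k + 1)))"
  have "eventually (\<lambda>n. g n \<noteq> 0) sequentially"
    using eventually_gt_at_top[of 0] by eventually_elim (simp add: g_def)
  hence "filterlim (\<lambda>n. norm (p n / g n)) at_top sequentially"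
    using p(1) unfolding g_def by (intro smallomegaD_filterlim_at_top_norm)
  hence pow_at_top: "filterlim (\<lambda>n. norm (p n / g n) ^ (k + 1)) at_top sequentially"
    by (intro filterlim_pow_at_top) simp_all
  obtain c where c: "c > 0" "eventually (\<lambda>n. c * norm (real n) \<le> norm (real (m n))) sequentially"
    using m by (rule landau_omega.bigE)
  have "filterlim (\<lambda>n. c * norm (p n / g n) ^ (k + 1)) at_top sequentially"
    by (rule filterlim_tendsto_pos_mult_at_top[OF tendsto_const c(1) pow_at_top])
  moreover have "eventually (\<lambda>n. c * norm (p n / g n) ^ (k + 1) \<le> real (m n) * p n ^ (k + 1)) sequentially"
    using c(2) eventually_gt_at_top[of 0]
  proof eventually_elim
    case (elim n)
    have "norm (p n / g n) ^ (k + 1) = real n * p n ^ (k + 1)"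
      using p(2) pow_div_threshold[OF elim(2)] by (simp add: g_def)
    thus ?case using elim(1) p(2) by (simp add: mult.assoc[symmetric] mult_right_mono)
  qed
  ultimately show ?thesis by (rule filterlim_at_top_mono)
qed

lemma reinforcement_valid_below_threshold:
  fixes V :: "nat \<Rightarrow> 'v set" and p :: "nat \<Rightarrow> real"
  assumes graphs: "\<forall>n. digraph (V n) (E n) \<and> card (V n) = n"
    and p_range: "\<forall>n. 0 \<le> p n \<and> p n \<le> 1"
    and p_below: "p \<in> o(\<lambda>n. real n powr (- 1 / real (f + 1)))"
  shows "(\<lambda>n. measure_pmf.prob (fault_pmf (V n) f (p n))
            {X. \<forall>v \<in> V n. card {i. i < 2 * f + 1 \<and> X (v, i)} \<le> f}) \<longlonglongrightarrow> 1"
    and "(\<lambda>n. measure_pmf.prob (fault_pmf (V n) f (p n))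
            {X. \<forall>adv inp. strong_sim f (V n) (E n) (A n) {x. X x} adv inp}) \<longlonglongrightarrow> 1"
proof -
  let ?M = "\<lambda>n. fault_pmf (V n) f (p n)"
  let ?few = "\<lambda>n. {X. \<forall>v \<in> V n. card {i. i < 2 * f + 1 \<and> X (v, i)} \<le> f}"
  define C where "C = real ((2 * f + 1) choose (f + 1))"
  have "(\<lambda>n. 1 - C * (real n * p n ^ (f + 1))) \<longlonglongrightarrow> 1 - C * 0"
    by (intro tendsto_intros tendsto_mult_pow_zero_if_smallo_threshold[OF p_below])
  hence lim_lower: "(\<lambda>n. 1 - C * (real n * p n ^ (f + 1))) \<longlonglongrightarrow> 1" by simp
  have lower: "1 - C * (real n * p n ^ (f + 1)) \<le> measure_pmf.prob (?M n) (?few n)" for n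
  proof -
    have "finite (V n)" "card (V n) = n" using graphs by (auto simp: digraph_def)
    moreover have "0 \<le> p n" "p n \<le> 1" using p_range by auto
    ultimately show ?thesis
      using prob_few_faulty_copies_ge[of "V n" "p n" f]
      by (simp only: C_def mult.commute[of "real n"] mult.assoc)
  qed
  show few: "(\<lambda>n. measure_pmf.prob (?M n) (?few n)) \<longlonglongrightarrow> 1"
    by (rule tendsto_sandwich[OF always_eventually always_eventually lim_lower tendsto_const])
      (use lower in auto)
  have "measure_pmf.prob (?M n) (?few n)
      \<le> measure_pmf.prob (?M n) {X. \<forall>adv inp. strong_sim f (V n) (E n) (A n) {x. X x} adv inp}" for n
    using graphs strong_sim_if_few_faulty_copies by (intro measure_pmf.finite_measure_mono) (blast, simp)
  thus "(\<lambda>n. measure_pmf.prob (?M n)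
            {X. \<forall>adv inp. strong_sim f (V n) (E n) (A n) {x. X x} adv inp}) \<longlonglongrightarrow> 1"
    by (intro tendsto_sandwich[OF always_eventually always_eventually few tendsto_const]) auto
qed

lemma reinforcement_invalid_above_threshold:
  fixes V :: "nat \<Rightarrow> 'v set" and p :: "nat \<Rightarrow> real"
  assumes graphs: "\<forall>n. digraph (V n) (E n)"
    and p_range: "\<forall>n. 0 \<le> p n" and p_lim: "p \<longlonglongrightarrow> 0"
    and senders: "(\<lambda>n. real (card {v \<in> V n. \<exists>w. (v, w) \<in> E n})) \<in> \<Omega>(\<lambda>n. real n)"
    and p_above: "p \<in> \<omega>(\<lambda>n. real n powr (- 1 / real (f + 1)))"
  shows "(\<lambda>n. measure_pmf.prob (fault_pmf (V n) f (p n))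
            {X. \<exists>v \<in> V n. (\<exists>w. (v, w) \<in> E n) \<and> f < card {i. i < 2 * f + 1 \<and> X (v, i)}}) \<longlonglongrightarrow> 1"
    and "(\<lambda>n. measure_pmf.prob (fault_pmf (V n) f (p n))
            {X. strong_sim f (V n) (E n) (silence_detector (E n)) {x. X x} (\<lambda>_ _ _. None) inp}) \<longlonglongrightarrow> 0"
proof -
  let ?M = "\<lambda>n. fault_pmf (V n) f (p n)"
  define W where "W = (\<lambda>n. {v \<in> V n. \<exists>w. (v, w) \<in> E n})"
  define Q where "Q = (\<lambda>n. measure_pmf.prob (?M n) {X. \<forall>u\<in>W n. X \<notin> silenced_link f (E n) u})"
  define R where "R = (\<lambda>n. (inverse (real (card (W n)) * p n ^ (f + 1)) + 1) / (1 - p n)\<^sup>2 - 1)"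
  have expected: "filterlim (\<lambda>n. real (card (W n)) * p n ^ (f + 1)) at_top sequentially"
    using filterlim_mult_pow_at_top_if_smallomega_threshold[OF p_above p_range, of "\<lambda>n. card (W n)"]
      senders by (simp add: W_def)
  have "(\<lambda>n. (inverse (real (card (W n)) * p n ^ (f + 1)) + 1) / (1 - p n)\<^sup>2 - 1)
      \<longlonglongrightarrow> (0 + 1) / (1 - 0)\<^sup>2 - 1"
    by (intro tendsto_intros tendsto_inverse_0_at_top[OF expected] p_lim) simp
  hence lim_R: "R \<longlonglongrightarrow> 0" by (simp add: R_def)
  have "eventually (\<lambda>n. 0 < real (card (W n)) * p n ^ (f + 1)) sequentially"
    using expected by (simp add: filterlim_at_top_dense)
  moreover have "eventually (\<lambda>n. p n < 1) sequentially"
    using order_tendstoD(2)[OF p_lim] by simp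
  ultimately have Q_le_R: "eventually (\<lambda>n. Q n \<le> R n) sequentially"
  proof eventually_elim
    case (elim n)
    have "0 < p n" "W n \<noteq> {}"
      using elim(1) p_range[rule_format, of n] by (auto simp: zero_less_mult_iff zero_less_power_eq)
    thus ?case unfolding Q_def R_def
      by (intro prob_no_silenced_link_le) (use graphs elim(2) in \<open>auto simp: W_def\<close>)
  qed
  have lim_Q: "Q \<longlonglongrightarrow> 0"
    by (rule tendsto_sandwich[OF always_eventually Q_le_R tendsto_const lim_R]) (simp add: Q_def)
  define Ov where "Ov = (\<lambda>n. {X. \<exists>v \<in> V n. (\<exists>w. (v, w) \<in> E n) \<and> f < card {i. i < 2 * f + 1 \<and> X (v, i)}})"
  have lower: "1 - Q n \<le> measure_pmf.prob (?M n) (Ov n)" for n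
  proof -
    have "1 - Q n = measure_pmf.prob (?M n) (- {X. \<forall>u\<in>W n. X \<notin> silenced_link f (E n) u})"
      using measure_pmf.prob_compl[of "{X. \<forall>u\<in>W n. X \<notin> silenced_link f (E n) u}" "?M n"]
      by (simp add: Q_def Compl_eq_Diff_UNIV)
    also have "\<dots> \<le> measure_pmf.prob (?M n) (Ov n)"
    proof (rule measure_pmf.finite_measure_mono)
      show "- {X. \<forall>u\<in>W n. X \<notin> silenced_link f (E n) u} \<subseteq> Ov n"
      proof
        fix X assume "X \<in> - {X. \<forall>u\<in>W n. X \<notin> silenced_link f (E n) u}"
        then obtain u where "u \<in> W n" and "X \<in> silenced_link f (E n) u" by blast
        moreover from this(2) have "f < card {i. i < 2 * f + 1 \<and> X (u, i)}"
          by (rule faulty_copies_gt_if_silenced_link)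
        ultimately show "X \<in> Ov n" unfolding Ov_def W_def by blast
      qed
    qed simp
    finally show ?thesis .
  qed
  have "(\<lambda>n. 1 - Q n) \<longlonglongrightarrow> 1 - 0" by (intro tendsto_intros lim_Q)
  hence lim_lower: "(\<lambda>n. 1 - Q n) \<longlonglongrightarrow> 1" by simp
  have "(\<lambda>n. measure_pmf.prob (?M n) (Ov n)) \<longlonglongrightarrow> 1"
    by (rule tendsto_sandwich[OF always_eventually always_eventually lim_lower tendsto_const])
      (use lower in auto)
  thus "(\<lambda>n. measure_pmf.prob (?M n)
      {X. \<exists>v \<in> V n. (\<exists>w. (v, w) \<in> E n) \<and> f < card {i. i < 2 * f + 1 \<and> X (v, i)}}) \<longlonglongrightarrow> 1"
    by (simp only: Ov_def)
  define Sim where "Sim = (\<lambda>n. {X. strong_sim f (V n) (E n) (silence_detector (E n)) {x. X x} (\<lambda>_ _ _. None) inp})"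
  have upper: "measure_pmf.prob (?M n) (Sim n) \<le> Q n" for n
    unfolding Q_def
  proof (rule measure_pmf.finite_measure_mono)
    show "Sim n \<subseteq> {X. \<forall>u\<in>W n. X \<notin> silenced_link f (E n) u}"
    proof (intro subsetI CollectI ballI notI)
      fix X u assume sim: "X \<in> Sim n" and u: "u \<in> W n" "X \<in> silenced_link f (E n) u"
      obtain w where "(u, w) \<in> E n" using u(1) by (auto simp: W_def)
      from not_strong_sim_if_silenced_link[OF graphs[rule_format] this u(2)] sim
      show False by (simp add: Sim_def)
    qed
  qed simp
  have "(\<lambda>n. measure_pmf.prob (?M n) (Sim n)) \<longlonglongrightarrow> 0"
    by (rule tendsto_sandwich[OF always_eventually always_eventually tendsto_const lim_Q]) (use upper in auto)
  thus "(\<lambda>n. measure_pmf.prob (?M n)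
      {X. strong_sim f (V n) (E n) (silence_detector (E n)) {x. X x} (\<lambda>_ _ _. None) inp}) \<longlonglongrightarrow> 0"
    by (simp only: Sim_def)
qed

theorem theorem2:
  fixes f :: nat and V :: "nat \<Rightarrow> 'v set" and E :: "nat \<Rightarrow> ('v \<times> 'v) set"
    and p :: "nat \<Rightarrow> real"
  assumes graphs: "\<forall>n. digraph (V n) (E n) \<and> card (V n) = n"
    and p_range: "\<forall>n. 0 \<le> p n \<and> p n \<le> 1"
    and p_small: "p \<in> o(\<lambda>n. 1)"
  shows
   "(p \<in> o(\<lambda>n. real n powr (- 1 / real (f + 1))) \<longrightarrow>
       ((\<lambda>n. measure_pmf.prob (fault_pmf (V n) f (p n))
               {X. \<forall>v \<in> V n. card {i. i < 2 * f + 1 \<and> X (v, i)} \<le> f}) \<longlonglongrightarrow> 1)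
     \<and> (\<forall>A :: nat \<Rightarrow> ('v, 's, 'm, 'i) alg.
          (\<lambda>n. measure_pmf.prob (fault_pmf (V n) f (p n))
               {X. \<forall>adv inp. strong_sim f (V n) (E n) (A n) {x. X x} adv inp}) \<longlonglongrightarrow> 1))
  \<and> ((\<lambda>n. real (card {v \<in> V n. \<exists>w. (v, w) \<in> E n})) \<in> \<Omega>(\<lambda>n. real n)
       \<and> p \<in> \<omega>(\<lambda>n. real n powr (- 1 / real (f + 1))) \<longrightarrow>
       ((\<lambda>n. measure_pmf.prob (fault_pmf (V n) f (p n))
               {X. \<exists>v \<in> V n. (\<exists>w. (v, w) \<in> E n) \<and> f < card {i. i < 2 * f + 1 \<and> X (v, i)}})
          \<longlonglongrightarrow> 1)
     \<and> (\<exists>(A :: nat \<Rightarrow> ('v, nat, unit, unit) alg) (inp :: nat \<Rightarrow> nat \<Rightarrow> 'v \<Rightarrow> unit).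
          (\<lambda>n. measure_pmf.prob (fault_pmf (V n) f (p n))
               {X. strong_sim f (V n) (E n) (A n) {x. X x} (\<lambda>_ _ _. None) (inp n)}) \<longlonglongrightarrow> 0))"
proof -
  have digraphs: "\<forall>n. digraph (V n) (E n)" and p_nonneg: "\<forall>n. 0 \<le> p n"
    using graphs p_range by simp_all
  have p_lim: "p \<longlonglongrightarrow> 0" using smalloD_tendsto[OF p_small] by simp
  note invalid = reinforcement_invalid_above_threshold[OF digraphs p_nonneg p_lim]
  note valid = reinforcement_valid_below_threshold[OF graphs p_range]
  show ?thesis
    using valid invalid(1) invalid(2)[where inp = "\<lambda>_ _. ()"]
    by (intro conjI impI allI exI[of _ "\<lambda>n. silence_detector (E n)"] exI[of _ "\<lambda>n _ _. ()"]) blast+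
qed

end
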